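(* Let $r(t)\in\mathbb{Z}[t]$ with $r(0)\neq0$, and let $X$ be the set of roots of $r(t)$ in $\overline{\mathbb{Q}}^\times$. The following are equivalent: (i) $X$ is not an arithmetically-free subset of $(\overline{\mathbb{Q}}^\times,\cdot)$; (ii) there exist $u\in\mathbb{N}$ and $s(t)\in\mathbb{Z}[t]\setminus\mathbb{Z}$ such that both the cyclotomic polynomial $\Phi_u(t)$ and $s(t^u)$ divide $r(t)$ in $\mathbb{Z}[t]$.
   Context: $\mathbb{N}=\{1,2,\dots\}$. A finite subset $X$ of an abelian group $(A,\cdot)$ is arithmetically-free if $X$ contains no progression $\lambda,\lambda\mu,\lambda\mu^2,\dots,\lambda\mu^{|X|}$ with $\lambda,\mu\in X$. $\Phi_u(t)$ denotes the $u$-th cyclotomic polynomial. *)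

theory Defs
  imports Complex_Main "HOL-Computational_Algebra.Polynomial"
begin

definition arith_free :: "'a::comm_monoid_mult set \<Rightarrow> bool" where
  "arith_free X \<longleftrightarrow> finite X \<and>
     \<not> (\<exists>l\<in>X. \<exists>m\<in>X. \<forall>k\<le>card X. l * m ^ k \<in> X)"

definition cyclotomic_complex :: "nat \<Rightarrow> complex poly" where
  "cyclotomic_complex u =
     (\<Prod>k\<in>{k\<in>{1..u}. coprime k u}. [: - cis (2 * pi * real k / real u), 1 :])"

text \<open>The u-th cyclotomic polynomial as an element of Z[t] (its coefficients are integers).\<close>
definition cyclotomic :: "nat \<Rightarrow> int poly" where
  "cyclotomic u = (THE p. map_poly of_int p = cyclotomic_complex u)"

end

theory Submission
  imports Defs "HOL-Computational_Algebra.Fundamental_Theorem_Algebra"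
    "HOL-Computational_Algebra.Polynomial_Factorial" "HOL-Number_Theory.Cong"
begin

text \<open>
  The number-theoretic input is the irreducibility of cyclotomic polynomials, by Dedekind's
  argument: if \<open>f\<close> is the minimal integer polynomial of a root of unity \<open>z\<close> of order \<open>u\<close> and
  \<open>p\<close> is a prime not dividing \<open>u\<close>, then \<open>f(z\<^sup>p) = 0\<close>. Otherwise \<open>f\<close> would divide
  \<open>g(t\<^sup>p) \<equiv> g(t)\<^sup>p (mod p)\<close> for the cofactor \<open>g\<close> of \<open>f\<close> in \<open>t\<^sup>u - 1\<close>, contradicting the
  separability of \<open>t\<^sup>u - 1\<close> modulo \<open>p\<close>. Hence the minimal polynomial of \<open>\<zeta>\<^sub>u\<close> vanishes
  exactly at the primitive \<open>u\<close>-th roots of unity, so it is \<open>\<Phi>\<^sub>u\<close>, which thus has integer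
  coefficients and is the minimal polynomial of every primitive \<open>u\<close>-th root of unity.

  If \<open>X\<close> contains \<open>\<lambda>, \<lambda>\<mu>, \<dots>, \<lambda>\<mu>\<^bsup>|X|\<^esup>\<close>, two of these coincide, so \<open>\<mu>\<close> is a primitive
  \<open>u\<close>-th root of unity for some \<open>u\<close>, and then \<open>\<lambda>w \<in> X\<close> for all \<open>u\<close>-th roots of unity \<open>w\<close>.
  The first fact gives \<open>\<Phi>\<^sub>u | r\<close>. For the second, write \<open>r(t) = \<Sum>\<^sub>i\<^sub><\<^sub>u t\<^sup>i c\<^sub>i(t\<^sup>u)\<close>: then
  \<open>\<Sum>\<^sub>i c\<^sub>i(\<lambda>\<^sup>u) \<lambda>\<^sup>i t\<^sup>i\<close> has degree \<open>< u\<close> and \<open>u\<close> roots, so every \<open>c\<^sub>i\<close> vanishes at \<open>\<lambda>\<^sup>u\<close>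
  and is divisible by the minimal polynomial \<open>s\<close> of \<open>\<lambda>\<^sup>u\<close>, whence \<open>s(t\<^sup>u) | r\<close>. Conversely,
  if \<open>\<Phi>\<^sub>u | r\<close> and \<open>s(t\<^sup>u) | r\<close>, choose \<open>\<lambda>\<close> with \<open>\<lambda>\<^sup>u\<close> a root of \<open>s\<close>; then
  \<open>\<lambda>\<zeta>\<^sub>u\<^sup>k \<in> X\<close> for all \<open>k\<close>.
\<close>

section \<open>Integer polynomials\<close>

abbreviation of_int_poly :: "int poly \<Rightarrow> 'a::comm_ring_1 poly" where
  "of_int_poly \<equiv> map_poly of_int"

lemma of_int_poly_add: "of_int_poly (p + q) = of_int_poly p + of_int_poly q"
  by (rule poly_eqI) (simp add: coeff_map_poly)

lemma of_int_poly_diff: "of_int_poly (p - q) = of_int_poly p - of_int_poly q"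
  by (rule poly_eqI) (simp add: coeff_map_poly)

lemma of_int_poly_mult: "of_int_poly (p * q) = of_int_poly p * of_int_poly q"
  by (rule poly_eqI) (simp add: coeff_map_poly coeff_mult)

lemma of_int_poly_smult: "of_int_poly (smult c p) = smult (of_int c) (of_int_poly p)"
  by (rule poly_eqI) (simp add: coeff_map_poly)

lemma of_int_poly_monom: "of_int_poly (monom c n) = monom (of_int c) n"
  by (simp add: map_poly_monom)

lemma of_int_poly_sum: "of_int_poly (\<Sum>i\<in>A. f i) = (\<Sum>i\<in>A. of_int_poly (f i))"
  by (induction A rule: infinite_finite_induct) (simp_all add: of_int_poly_add)

lemma of_int_poly_pcompose:
  "of_int_poly (pcompose p q) = pcompose (of_int_poly p) (of_int_poly q)"
  by (induction p) (simp_all add: map_poly_pCons pcompose_pCons of_int_poly_add of_int_poly_mult)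

lemmas of_int_poly_hom = of_int_poly_add of_int_poly_diff of_int_poly_mult of_int_poly_smult
  of_int_poly_monom of_int_poly_sum of_int_poly_pcompose

lemma of_int_poly_dvd: "p dvd q \<Longrightarrow> of_int_poly p dvd of_int_poly q"
  by (auto simp: of_int_poly_mult elim!: dvdE)

lemma of_int_poly_eq_iff [simp]:
  "(of_int_poly p :: 'a::{comm_ring_1,ring_char_0} poly) = of_int_poly q \<longleftrightarrow> p = q"
  by (metis coeff_map_poly of_int_0 of_int_eq_iff poly_eqI)

lemma poly_of_int_poly_dvd:
  "p dvd q \<Longrightarrow> poly (of_int_poly p) z = 0 \<Longrightarrow> poly (of_int_poly q) z = 0"
  by (auto simp: of_int_poly_mult elim!: dvdE)

lemma poly_of_int_poly_X_power_minus_1 [simp]: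
  "poly (of_int_poly (monom 1 n - 1)) z = z ^ n - 1"
  by (simp add: of_int_poly_hom poly_monom)

section \<open>Frobenius congruence\<close>

lemma prime_dvd_add_power_sub:
  fixes a b :: "'a::comm_ring_1"
  assumes "prime p"
  shows "of_nat p dvd (a + b) ^ p - (a ^ p + b ^ p)"
proof -
  have p: "p > 0" using assms prime_gt_0_nat by blast
  have "(a + b) ^ p = (\<Sum>k\<le>p. of_nat (p choose k) * a ^ k * b ^ (p - k))"
    by (rule binomial_ring)
  also have "{..p} = insert 0 (insert p {1..<p})" using p by auto
  finally have "(a + b) ^ p - (a ^ p + b ^ p) =
      (\<Sum>k\<in>{1..<p}. of_nat (p choose k) * a ^ k * b ^ (p - k))"
    using p by (simp add: algebra_simps)
  also have "of_nat p dvd \<dots>"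
  proof (intro dvd_sum dvd_mult2)
    fix k assume "k \<in> {1..<p}"
    then have "p dvd p choose k" using assms by (intro dvd_choose_prime) auto
    then show "of_nat p dvd (of_nat (p choose k) :: 'a)" by (metis dvd_def of_nat_mult)
  qed
  finally show ?thesis .
qed

lemma prime_dvd_power_sub_self:
  fixes a :: int
  assumes "prime p"
  shows "int p dvd a ^ p - a"
proof -
  have step: "int p dvd (j + 1) ^ p - (j + 1) \<longleftrightarrow> int p dvd j ^ p - j" for j :: int
  proof -
    have "(j + 1) ^ p - (j + 1) = ((j + 1) ^ p - (j ^ p + 1 ^ p)) + (j ^ p - j)" by simp
    moreover have "int p dvd (j + 1) ^ p - (j ^ p + 1 ^ p)"
      using prime_dvd_add_power_sub[OF assms, of j 1] by simp
    ultimately show ?thesis by (metis dvd_add_right_iff)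
  qed
  show ?thesis
  proof (induction a rule: int_induct[where k = 0])
    case base
    then show ?case using assms prime_gt_0_nat by (simp add: power_0_left)
  next
    case (step1 i)
    then show ?case using step[of i] by simp
  next
    case (step2 i)
    then show ?case using step[of "i - 1"] by simp
  qed
qed

lemma prime_dvd_power_sub_pcompose_monom:
  fixes g :: "int poly"
  assumes "prime p"
  shows "of_nat p dvd g ^ p - pcompose g (monom 1 p)"
proof (induction g)
  case 0
  then show ?case using assms prime_gt_0_nat by (simp add: power_0_left)
next
  case (pCons a g)
  define x :: "int poly" where "x = monom 1 1"
  have "pCons a g = [:a:] + x * g"
    by (simp add: x_def monom_Suc monom_0 mult.commute)
  moreover have "pcompose (pCons a g) (monom 1 p) = [:a:] + x ^ p * pcompose g (monom 1 p)"
    by (simp add: x_def pcompose_pCons monom_power)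
  ultimately have "pCons a g ^ p - pcompose (pCons a g) (monom 1 p) =
      (([:a:] + x * g) ^ p - ([:a:] ^ p + (x * g) ^ p)) + [:a ^ p - a:]
      + x ^ p * (g ^ p - pcompose g (monom 1 p))"
    by (simp add: power_mult_distrib poly_const_pow algebra_simps)
  moreover have "of_nat p dvd [:a ^ p - a:]"
  proof -
    obtain k where "a ^ p - a = int p * k" using prime_dvd_power_sub_self[OF assms] by blast
    then have "[:a ^ p - a:] = of_nat p * [:k:]" by (simp add: of_nat_poly)
    then show ?thesis by (metis dvd_triv_left)
  qed
  ultimately show ?case
    using prime_dvd_add_power_sub[OF assms] pCons.IH by (metis dvd_add dvd_mult)
qed

section \<open>Minimal integer polynomials\<close>

lemma primitive_dvd_smult_cancel:
  fixes p q :: "int poly"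
  assumes "content p = 1" "c \<noteq> 0" "p dvd smult c q"
  shows "p dvd q"
proof -
  have "fract_poly p dvd smult (to_fract c) (fract_poly q)"
    using fract_poly_dvd[OF assms(3)] by (simp add: fract_poly_smult)
  then have "fract_poly p dvd fract_poly q"
    using assms(2) by (simp add: dvd_smult_iff)
  then show ?thesis using assms(1) by (rule fract_poly_dvdD)
qed

definition int_minpoly :: "'a::field_char_0 \<Rightarrow> int poly \<Rightarrow> bool" where
  "int_minpoly z f \<longleftrightarrow>
     f \<noteq> 0 \<and> poly (of_int_poly f) z = 0 \<and> (\<forall>h. poly (of_int_poly h) z = 0 \<longrightarrow> f dvd h)"

lemma int_minpoly_dvd_iff:
  assumes "int_minpoly z f"
  shows "f dvd h \<longleftrightarrow> poly (of_int_poly h) z = 0"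
  using assms unfolding int_minpoly_def by (auto intro: poly_of_int_poly_dvd)

lemma int_minpoly_exists:
  fixes z :: "'a::field_char_0"
  assumes "h0 \<noteq> 0" "poly (of_int_poly h0) z = 0"
  obtains f where "int_minpoly z f"
proof -
  let ?vanishes = "\<lambda>m. m \<noteq> 0 \<and> poly (of_int_poly m) z = 0"
  have "\<exists>m0. ?vanishes m0 \<and> (\<forall>m. ?vanishes m \<longrightarrow> degree m0 \<le> degree m)"
    by (rule ex_has_least_nat) (use assms in simp)
  then obtain m0 where m0: "?vanishes m0"
    and least: "\<And>m. ?vanishes m \<Longrightarrow> degree m0 \<le> degree m"
    by blast
  define m where "m = primitive_part m0"
  have "poly (of_int_poly m0) z = of_int (content m0) * poly (of_int_poly m) z"
    by (subst content_times_primitive_part[symmetric, of m0])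
       (simp only: m_def of_int_poly_smult poly_smult)
  then have m: "?vanishes m" using m0 by (simp add: m_def)
  have "m dvd h" if h: "poly (of_int_poly h) z = 0" for h
  proof -
    obtain q r where qr: "pseudo_divmod h m = (q, r)" by (cases "pseudo_divmod h m")
    define c where "c = lead_coeff m ^ (Suc (degree h) - degree m)"
    have division: "smult c h = m * q + r" and remainder: "r = 0 \<or> degree r < degree m"
      using pseudo_divmod[OF _ qr] m unfolding c_def by auto
    have "r = smult c h - m * q" using division by simp
    then have "poly (of_int_poly r) z = 0"
      using h m by (simp add: of_int_poly_hom)
    then have "r = 0"
      using least[of r] remainder unfolding m_def degree_primitive_part by (metis leD)
    then have "m dvd smult c h" using division by simp
    moreover have "c \<noteq> 0" using m by (simp add: c_def)
    moreover have "content m = 1" using m by (simp add: m_def)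
    ultimately show ?thesis by (intro primitive_dvd_smult_cancel[of m c h])
  qed
  with m show ?thesis by (intro that[of m]) (simp add: int_minpoly_def)
qed

lemma degree_int_minpoly_pos:
  assumes "int_minpoly z f"
  shows "degree f > 0"
proof (rule ccontr)
  assume "\<not> degree f > 0"
  then obtain c where "f = [:c:]" by (metis degree_eq_zeroE gr0I)
  then show False using assms by (auto simp: int_minpoly_def map_poly_pCons)
qed

lemma int_minpoly_associated:
  assumes "int_minpoly z f" "f dvd g" "g dvd f"
  shows "int_minpoly z g"
proof -
  have "g \<noteq> 0" using assms(1,3) by (auto simp: int_minpoly_def)
  moreover have "poly (of_int_poly g) z = 0" using assms(2) int_minpoly_dvd_iff[OF assms(1)] by simp
  moreover have "g dvd h" if "poly (of_int_poly h) z = 0" for h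
    using that assms(3) int_minpoly_dvd_iff[OF assms(1)] by (meson dvd_trans)
  ultimately show ?thesis unfolding int_minpoly_def by blast
qed

lemma int_minpoly_conjugate:
  fixes z w :: "'a::field_char_0"
  assumes f: "int_minpoly z f" and w: "poly (of_int_poly f) w = 0"
  shows "int_minpoly w f"
proof -
  have "f \<noteq> 0" using f by (simp add: int_minpoly_def)
  then obtain m where m: "int_minpoly w m" using int_minpoly_exists w by blast
  then obtain q where q: "f = m * q" using w int_minpoly_dvd_iff[OF m] by blast
  have "poly (of_int_poly m) z = 0 \<or> poly (of_int_poly q) z = 0"
    using f q by (simp add: int_minpoly_def of_int_poly_mult)
  then have "f dvd m"
  proof
    assume "poly (of_int_poly q) z = 0"
    then obtain v where "q = f * v" using int_minpoly_dvd_iff[OF f] by blast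
    then have "f * (m * v) = f * 1" using q by (simp add: ac_simps)
    then have "m * v = 1" using \<open>f \<noteq> 0\<close> by (simp only: mult_cancel_left) simp
    then obtain c where "m = [:c:]" by (metis dvdI is_unit_polyE)
    then show ?thesis using degree_int_minpoly_pos[OF m] by simp
  qed (simp add: int_minpoly_dvd_iff[OF f])
  then show ?thesis using q by (intro int_minpoly_associated[OF m]) auto
qed

lemma int_minpoly_power_eq_1_iff:
  fixes z w :: "'a::field_char_0"
  assumes "int_minpoly z f" "poly (of_int_poly f) w = 0"
  shows "w ^ n = 1 \<longleftrightarrow> z ^ n = 1"
proof -
  have "w ^ n = 1 \<longleftrightarrow> f dvd monom 1 n - 1"
    using int_minpoly_dvd_iff[OF int_minpoly_conjugate[OF assms]] by simp
  also have "\<dots> \<longleftrightarrow> z ^ n = 1"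
    using int_minpoly_dvd_iff[OF assms(1)] by simp
  finally show ?thesis .
qed

section \<open>Dedekind's argument\<close>

lemma root_unity_power: "x ^ n = 1 \<Longrightarrow> (x ^ k) ^ n = (1 :: 'a::comm_monoid_mult)"
  by (metis power_mult mult.commute power_one)

lemma lead_coeff_X_power_minus_1:
  assumes "n > 0"
  shows "lead_coeff (monom 1 n - 1 :: 'a::comm_ring_1 poly) = 1"
proof -
  have "degree (monom 1 n - 1 :: 'a poly) = n"
    using degree_add_eq_left[of "- 1" "monom (1::'a) n"] assms by (simp add: degree_monom_eq)
  then show ?thesis using assms by simp
qed

lemma lead_coeff_dvd_1_if_dvd_X_power_minus_1:
  fixes f :: "'a::idom poly"
  assumes "f dvd monom 1 n - 1" "n > 0"
  shows "lead_coeff f dvd 1"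
proof -
  obtain g where "monom 1 n - 1 = f * g" using assms(1) ..
  then have "lead_coeff f * lead_coeff g = 1"
    using lead_coeff_X_power_minus_1[where 'a = 'a, OF assms(2)] by (simp add: lead_coeff_mult)
  then show ?thesis by (metis dvdI)
qed

text \<open>A polynomial with unit leading coefficient keeps its degree modulo \<open>m\<close>.\<close>
lemma dvd_const_if_dvd_const_add_smult:
  fixes f h :: "'a::idom poly"
  assumes unit: "lead_coeff f dvd 1" and deg: "degree f > 0"
    and dvd: "f dvd [:c:] + smult m h"
  shows "m dvd c"
proof -
  obtain q r where qr: "pseudo_divmod h f = (q, r)" by (cases "pseudo_divmod h f")
  define u where "u = lead_coeff f ^ (Suc (degree h) - degree f)"
  have "f \<noteq> 0" using deg by auto
  then have division: "smult u h = f * q + r" and remainder: "r = 0 \<or> degree r < degree f"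
    using pseudo_divmod[OF _ qr] by (auto simp: u_def)
  have "f dvd smult u ([:c:] + smult m h)" using dvd by (rule dvd_smult)
  also have "smult u ([:c:] + smult m h) = [:u * c:] + smult m (smult u h)"
    by (simp add: smult_add_right mult.commute)
  also have "\<dots> = ([:u * c:] + smult m r) + smult m q * f"
    by (simp add: division smult_add_right algebra_simps)
  finally have "f dvd [:u * c:] + smult m r" by (simp only: dvd_add_times_triv_right_iff)
  moreover have "degree ([:u * c:] + smult m r) \<le> degree r"
    by (intro degree_add_le) (simp_all add: degree_smult_le)
  then have "degree ([:u * c:] + smult m r) < degree f"
    using remainder deg by auto
  ultimately have "[:u * c:] + smult m r = 0"
    using dvd_imp_degree_le[of f "[:u * c:] + smult m r"] by linarith
  then have "coeff ([:u * c:] + smult m r) 0 = 0" by simp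
  then have "u * c = - (m * coeff r 0)" by (simp add: eq_neg_iff_add_eq_0)
  then have "m dvd u * c" by simp
  moreover have "u dvd 1" using dvd_power_same[OF unit] by (simp add: u_def)
  then obtain v where "1 = u * v" ..
  then have "c = v * (u * c)" by (metis mult.assoc mult.commute mult_1)
  ultimately show ?thesis by (metis dvd_mult)
qed

text \<open>Modulo a prime \<open>p\<close> not dividing \<open>u\<close>, \<open>t\<^sup>u - 1\<close> is coprime to its derivative, so its
  factor \<open>f\<close> cannot divide a power of the cofactor \<open>g\<close>. The identity
  \<open>t (t\<^sup>u - 1)' - u (t\<^sup>u - 1) = u\<close> makes this explicit: it gives \<open>u\<^sup>p \<equiv> (t f' g)\<^sup>p (mod f)\<close>.\<close>
lemma prime_dvd_if_factor_dvd_cofactor_power_mod: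
  fixes f g h :: "int poly"
  assumes fg: "monom 1 u - 1 = f * g" and unit: "lead_coeff f dvd 1" and deg: "degree f > 0"
    and p: "prime p" and dvd: "f dvd g ^ p + smult (int p) h"
  shows "p dvd u"
proof -
  define x :: "int poly" where "x = monom 1 1"
  define X where "X = x * pderiv f * g"
  define B where "B = x * pderiv g - [:int u:] * g"
  have "x * pderiv (monom 1 u - 1) = monom (int u) u"
    by (cases u) (simp_all add: x_def pderiv_diff pderiv_monom mult_monom)
  also have "\<dots> = [:int u:] * (monom 1 u - 1) + [:int u:]"
    by (simp add: algebra_simps smult_monom)
  finally have u: "[:int u:] = X + f * B"
    unfolding fg X_def B_def by (simp add: pderiv_mult algebra_simps)
  obtain A where "g ^ p + smult (int p) h = f * A" using dvd by blast
  then have A: "g ^ p = f * A - smult (int p) h" by (simp add: eq_diff_eq)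
  obtain C where C: "(X + f * B) ^ p - X ^ p = f * C"
    using power_diff_sumr2[of "X + f * B" p X] by (auto simp: mult.assoc)
  have "[:int u ^ p:] = [:int u:] ^ p" by (simp add: poly_const_pow)
  also have "\<dots> = (X + f * B) ^ p" by (simp only: u)
  also have "\<dots> = (x * pderiv f) ^ p * g ^ p + f * C"
    using C by (simp add: X_def power_mult_distrib eq_diff_eq)
  also have "\<dots> = f * ((x * pderiv f) ^ p * A + C) - smult (int p) ((x * pderiv f) ^ p * h)"
    by (simp add: A algebra_simps)
  finally have "f dvd [:int u ^ p:] + smult (int p) ((x * pderiv f) ^ p * h)"
    by (simp add: algebra_simps)
  then have "int p dvd int u ^ p"
    using unit deg by (rule dvd_const_if_dvd_const_add_smult[rotated 2])
  then show ?thesis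
    using p by (metis of_nat_dvd_iff of_nat_power prime_dvd_power prime_nat_int_transfer)
qed

lemma int_minpoly_root_power_prime:
  fixes z :: "'a::field_char_0"
  assumes f: "int_minpoly z f" and z: "z ^ u = 1" and p: "prime p" "\<not> p dvd u"
  shows "poly (of_int_poly f) (z ^ p) = 0"
proof (rule ccontr)
  assume not_root: "poly (of_int_poly f) (z ^ p) \<noteq> 0"
  have "f dvd monom 1 u - 1" using z by (simp add: int_minpoly_dvd_iff[OF f])
  then obtain g where fg: "monom 1 u - 1 = f * g" ..
  have "u > 0" using p by (auto intro: gr0I)
  with \<open>f dvd monom 1 u - 1\<close> have unit: "lead_coeff f dvd 1"
    by (rule lead_coeff_dvd_1_if_dvd_X_power_minus_1)
  have "poly (of_int_poly (f * g)) (z ^ p) = 0"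
    using root_unity_power[OF z] by (simp flip: fg)
  then have "poly (of_int_poly (pcompose g (monom 1 p))) z = 0"
    using not_root by (simp add: of_int_poly_hom poly_pcompose poly_monom)
  then have "f dvd pcompose g (monom 1 p)" using int_minpoly_dvd_iff[OF f] by simp
  moreover obtain h where "g ^ p - pcompose g (monom 1 p) = of_nat p * h"
    using prime_dvd_power_sub_pcompose_monom[OF p(1)] by blast
  ultimately have "f dvd g ^ p + smult (int p) (- h)"
    by (simp add: of_nat_poly algebra_simps)
  then have "p dvd u"
    using fg unit degree_int_minpoly_pos[OF f] p(1)
    by (intro prime_dvd_if_factor_dvd_cofactor_power_mod)
  then show False using p(2) by contradiction
qed

lemma int_minpoly_root_power_coprime:
  fixes z :: "'a::field_char_0"
  assumes f: "int_minpoly z f" and z: "z ^ u = 1"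
  shows "coprime k u \<Longrightarrow> poly (of_int_poly f) (z ^ k) = 0"
proof (induction k rule: prime_divisors_induct)
  case zero
  then have "z = 1" using z by simp
  then show ?case using f by (simp add: int_minpoly_def)
next
  case (unit k)
  then show ?case using f by (simp add: int_minpoly_def)
next
  case (factor p k)
  then have "coprime k u" "\<not> p dvd u"
    by (auto dest: prime_imp_coprime_nat simp: coprime_commute)
  then have "int_minpoly (z ^ k) f"
    using factor.IH f by (intro int_minpoly_conjugate[OF f]) simp
  moreover have "(z ^ k) ^ u = 1" using z by (rule root_unity_power)
  ultimately have "poly (of_int_poly f) ((z ^ k) ^ p) = 0"
    using factor.hyps \<open>\<not> p dvd u\<close> by (intro int_minpoly_root_power_prime)
  then show ?case by (simp add: power_mult mult.commute)
qed

section \<open>Roots of unity\<close>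

lemma power_mod_if_power_eq_1:
  fixes x :: "'a::monoid_mult"
  assumes "x ^ n = 1"
  shows "x ^ (k mod n) = x ^ k"
proof -
  have "x ^ k = x ^ (n * (k div n) + k mod n)" by simp
  also have "\<dots> = (x ^ n) ^ (k div n) * x ^ (k mod n)" by (simp only: power_add power_mult)
  finally show ?thesis using assms by simp
qed

definition zeta :: "nat \<Rightarrow> complex" where
  "zeta n = cis (2 * pi / real n)"

lemma zeta_power: "zeta n ^ k = cis (2 * pi * real k / real n)"
  by (simp add: zeta_def DeMoivre mult_ac)

lemma zeta_power_self: "n > 0 \<Longrightarrow> zeta n ^ n = 1"
  by (simp add: zeta_power)

lemma zeta_power_eq_iff:
  assumes "n > 0"
  shows "zeta n ^ a = zeta n ^ b \<longleftrightarrow> [a = b] (mod n)"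
proof -
  have "inj_on (\<lambda>k. zeta n ^ k) {..<n}"
    using bij_betw_imp_inj_on[OF bij_betw_roots_unity[OF assms]] by (simp add: zeta_power)
  then have "zeta n ^ (a mod n) = zeta n ^ (b mod n) \<longleftrightarrow> a mod n = b mod n"
    using assms by (auto dest: inj_onD)
  then show ?thesis
    using power_mod_if_power_eq_1[OF zeta_power_self[OF assms]] by (simp add: cong_def)
qed

lemma zeta_power_eq_1_iff: "n > 0 \<Longrightarrow> zeta n ^ k = 1 \<longleftrightarrow> n dvd k"
  using zeta_power_eq_iff[of n k 0] by (simp add: cong_0_iff)

lemma root_unity_eq_zeta_power:
  assumes "n > 0" "w ^ n = 1"
  obtains k where "k < n" "w = zeta n ^ k"
proof -
  have "w \<in> (\<lambda>k. cis (2 * pi * real k / real n)) ` {..<n}"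
    using bij_betw_imp_surj_on[OF bij_betw_roots_unity[OF assms(1)]] assms(2) by blast
  then show ?thesis using that by (auto simp: zeta_power)
qed

lemma root_unity_eq_power_zeta_power:
  assumes "n > 0" "coprime k n" "w ^ n = 1"
  obtains j where "w = (zeta n ^ k) ^ j"
proof -
  obtain i where w: "w = zeta n ^ i" using root_unity_eq_zeta_power assms(1,3) by blast
  obtain x where "[k * x = 1] (mod n)" using cong_solve_coprime_nat[OF assms(2)] by auto
  then have "[k * (x * i) = i] (mod n)"
    using cong_scalar_right[of "k * x" 1 n i] by (simp add: mult.assoc)
  then have "zeta n ^ (k * (x * i)) = w" using assms(1) w by (simp add: zeta_power_eq_iff)
  then show ?thesis using that[of "x * i"] by (simp add: power_mult)
qed

lemma root_unity_eq_primitive_zeta_power: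
  assumes "d > 0" "w ^ d = 1"
  obtains n k where "n > 0" "coprime k n" "w = zeta n ^ k"
proof -
  obtain j where w: "w = zeta d ^ j" using root_unity_eq_zeta_power assms by blast
  define g where "g = gcd j d"
  have "g > 0" using assms(1) by (simp add: g_def)
  define n k where "n = d div g" and "k = j div g"
  have d: "d = n * g" and j: "j = k * g" by (simp_all add: n_def k_def g_def)
  have "n > 0" using assms(1) d by (cases n) auto
  moreover have "coprime k n" using assms(1) by (simp add: n_def k_def g_def div_gcd_coprime)
  moreover have "w = zeta n ^ k"
    using \<open>g > 0\<close> by (simp add: w zeta_power d j mult.assoc)
  ultimately show ?thesis using that by blast
qed

lemma coprime_if_dvd_mult_imp_dvd:
  fixes k n :: nat
  assumes "n > 0" "\<And>e. n dvd k * e \<Longrightarrow> n dvd e"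
  shows "coprime k n"
proof -
  define g where "g = gcd k n"
  have "g dvd k" "g dvd n" by (simp_all add: g_def)
  then obtain k' m where k: "k = k' * g" and n: "n = m * g" by (metis dvd_def mult.commute)
  have "g > 0" using assms(1) by (simp add: g_def)
  then have "k * m = k' * n" by (simp add: k n)
  then have "n dvd m" using assms(2)[of m] by simp
  moreover have "m dvd n" using n by simp
  ultimately have "n = m" by (rule dvd_antisym)
  then have "g = 1" using n assms(1) by simp
  then show ?thesis by (simp add: g_def coprime_iff_gcd_eq_1)
qed

section \<open>Cyclotomic polynomials\<close>

lemma rsquarefree_X_power_minus_1:
  assumes "n > 0"
  shows "rsquarefree (monom 1 n - 1 :: 'a::field_char_0 poly)"
proof -
  have "poly (pderiv (monom 1 n - 1 :: 'a poly)) a \<noteq> 0" if "a ^ n = 1" for a :: 'a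
    using that assms
    by (cases "a = 0") (simp_all add: pderiv_diff pderiv_monom poly_monom power_0_left)
  then show ?thesis by (auto simp: rsquarefree_roots poly_monom)
qed

lemma rsquarefree_dvd:
  assumes "rsquarefree q" "p dvd q"
  shows "rsquarefree p"
proof -
  have "q \<noteq> 0" using assms(1) by (simp add: rsquarefree_def)
  then have "p \<noteq> 0" using assms(2) by auto
  moreover have "order a p \<le> 1" for a
  proof -
    have "order a q = 0 \<or> order a q = 1" using assms(1) by (simp add: rsquarefree_def)
    then show ?thesis using dvd_imp_order_le[OF \<open>q \<noteq> 0\<close> assms(2), of a] by linarith
  qed
  ultimately show ?thesis by (auto simp: rsquarefree_def le_Suc_eq)
qed

lemma inj_on_zeta_power: "n > 0 \<Longrightarrow> inj_on (\<lambda>k. zeta n ^ k) {1..n}"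
  by (rule inj_onI) (auto simp: zeta_power_eq_iff cong_def mod_if split: if_splits)

lemma roots_int_minpoly_zeta:
  assumes n: "n > 0" and f: "int_minpoly (zeta n) f"
  shows "{w. poly (of_int_poly f) w = 0} = (\<lambda>k. zeta n ^ k) ` {k \<in> {1..n}. coprime k n}"
proof (intro equalityI subsetI)
  fix w :: complex assume "w \<in> {w. poly (of_int_poly f) w = 0}"
  then have root: "poly (of_int_poly f) w = 0" by simp
  have order: "w ^ e = 1 \<longleftrightarrow> n dvd e" for e
    using int_minpoly_power_eq_1_iff[OF f root] zeta_power_eq_1_iff[OF n] by simp
  then have "w ^ n = 1" by simp
  then obtain k where "k < n" "w = zeta n ^ k" by (rule root_unity_eq_zeta_power[OF n])
  moreover define k' where "k' = (if k = 0 then n else k)"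
  ultimately have w: "w = zeta n ^ k'" and k': "k' \<in> {1..n}"
    using zeta_power_self[OF n] by auto
  have "coprime k' n"
  proof (rule coprime_if_dvd_mult_imp_dvd[OF n])
    fix e assume "n dvd k' * e"
    then have "w ^ e = 1" by (simp add: w zeta_power_eq_1_iff[OF n] flip: power_mult)
    then show "n dvd e" by (simp add: order)
  qed
  then show "w \<in> (\<lambda>k. zeta n ^ k) ` {k \<in> {1..n}. coprime k n}" using w k' by blast
next
  fix w :: complex assume "w \<in> (\<lambda>k. zeta n ^ k) ` {k \<in> {1..n}. coprime k n}"
  then obtain k where "coprime k n" "w = zeta n ^ k" by blast
  then show "w \<in> {w. poly (of_int_poly f) w = 0}"
    using int_minpoly_root_power_coprime[OF f zeta_power_self[OF n]] by simp
qed

lemma of_int_poly_monic_int_minpoly_zeta: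
  assumes n: "n > 0" and f: "int_minpoly (zeta n) f" and monic: "lead_coeff f = 1"
  shows "of_int_poly f = cyclotomic_complex n"
proof -
  let ?F = "of_int_poly f :: complex poly"
  have "f dvd monom 1 n - 1" using zeta_power_self[OF n] by (simp add: int_minpoly_dvd_iff[OF f])
  then have "?F dvd monom 1 n - 1" using of_int_poly_dvd by (fastforce simp: of_int_poly_hom)
  then have "rsquarefree ?F" using rsquarefree_dvd rsquarefree_X_power_minus_1[OF n] by blast
  then have "?F = (\<Prod>w | poly ?F w = 0. [:- w, 1:])"
    using complex_poly_decompose_rsquarefree[of ?F] monic
    by (simp add: degree_map_poly coeff_map_poly)
  also have "\<dots> = (\<Prod>k \<in> {k \<in> {1..n}. coprime k n}. [:- (zeta n ^ k), 1:])"
    unfolding roots_int_minpoly_zeta[OF n f]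
    by (rule prod.reindex[unfolded comp_def]) (rule inj_on_subset[OF inj_on_zeta_power[OF n]], auto)
  also have "\<dots> = cyclotomic_complex n" by (simp add: cyclotomic_complex_def zeta_power)
  finally show ?thesis .
qed

lemma monic_int_minpoly_zeta_exists:
  assumes n: "n > 0"
  obtains f where "int_minpoly (zeta n) f" "lead_coeff f = 1"
proof -
  have "monom 1 n - 1 \<noteq> (0 :: int poly)"
    using lead_coeff_X_power_minus_1[OF n, where 'a = int] by (intro notI) simp
  moreover have "poly (of_int_poly (monom 1 n - 1)) (zeta n) = 0" using zeta_power_self[OF n] by simp
  ultimately obtain f0 where f0: "int_minpoly (zeta n) f0" by (rule int_minpoly_exists)
  define c where "c = lead_coeff f0"
  have "f0 dvd monom 1 n - 1" using zeta_power_self[OF n] by (simp add: int_minpoly_dvd_iff[OF f0])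
  then have "c dvd 1" unfolding c_def using n by (rule lead_coeff_dvd_1_if_dvd_X_power_minus_1)
  then have cc: "c * c = 1" using abs_mult_self_eq[of c] by simp
  have "smult c (smult c f0) = f0" using cc by simp
  then have "smult c f0 dvd f0" by (metis dvd_refl dvd_smult)
  then have "int_minpoly (zeta n) (smult c f0)"
    by (intro int_minpoly_associated[OF f0] dvd_smult dvd_refl)
  moreover have "lead_coeff (smult c f0) = 1" using cc f0 by (simp add: c_def int_minpoly_def)
  ultimately show ?thesis using that by blast
qed

lemma int_minpoly_cyclotomic:
  assumes n: "n > 0"
  shows "int_minpoly (zeta n) (cyclotomic n)"
proof -
  obtain f where f: "int_minpoly (zeta n) f" "lead_coeff f = 1"
    using monic_int_minpoly_zeta_exists[OF n] .
  have f_eq: "of_int_poly f = cyclotomic_complex n"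
    using of_int_poly_monic_int_minpoly_zeta[OF n f] .
  have "cyclotomic n = f" unfolding cyclotomic_def
  proof (rule the_equality)
    fix p assume "of_int_poly p = cyclotomic_complex n"
    then have "(of_int_poly p :: complex poly) = of_int_poly f" using f_eq by simp
    then show "p = f" by simp
  qed (fact f_eq)
  then show ?thesis using f by simp
qed

lemma ex_decomposition_pcompose_monom:
  fixes p :: "'a::comm_semiring_1 poly"
  assumes "n > 0"
  shows "\<exists>c. p = (\<Sum>i<n. monom 1 i * pcompose (c i) (monom 1 n))"
proof (induction p)
  case 0
  show ?case by (rule exI[of _ "\<lambda>_. 0"]) simp
next
  case (pCons a p)
  then obtain c where p: "p = (\<Sum>i<n. monom 1 i * pcompose (c i) (monom 1 n))" by blast
  obtain m where n: "n = Suc m" using assms by (cases n) auto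
  define c' where "c' i = (if i = 0 then [:a:] + monom 1 1 * c m else c (i - 1))" for i
  have "pcompose (c' 0) (monom 1 n) = [:a:] + monom 1 n * pcompose (c m) (monom 1 n)"
    by (simp add: c'_def pcompose_add pcompose_mult monom_Suc monom_0 pcompose_pCons)
  then have "(\<Sum>i<n. monom 1 i * pcompose (c' i) (monom 1 n)) =
      [:a:] + monom 1 n * pcompose (c m) (monom 1 n)
      + (\<Sum>i<m. monom 1 (Suc i) * pcompose (c i) (monom 1 n))"
    unfolding n sum.lessThan_Suc_shift by (simp add: c'_def flip: n)
  also have "\<dots> = [:a:] + monom 1 1 * p"
    by (simp add: p n distrib_left sum_distrib_left mult_monom add_ac flip: mult.assoc)
  also have "\<dots> = pCons a p" by (simp add: monom_Suc monom_0 mult.commute)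
  finally show ?case by (intro exI[of _ c']) simp
qed

lemma poly_of_int_poly_decomposition:
  assumes "r = (\<Sum>i<n. monom 1 i * pcompose (c i) (monom 1 n))"
  shows "poly (of_int_poly r) z = (\<Sum>i<n. z ^ i * poly (of_int_poly (c i)) (z ^ n))"
  by (simp add: assms of_int_poly_hom poly_sum poly_pcompose poly_monom)

text \<open>If \<open>r(l w) = 0\<close> for all \<open>n\<close>-th roots of unity \<open>w\<close>, then the polynomial
  \<open>\<Sum>\<^sub>i c\<^sub>i(l\<^sup>n) l\<^sup>i t\<^sup>i\<close> of degree \<open>< n\<close> has \<open>n\<close> roots.\<close>
lemma decomposition_components_vanish:
  fixes l :: complex and c :: "nat \<Rightarrow> int poly"
  assumes n: "n > 0" and l: "l \<noteq> 0"
    and r: "r = (\<Sum>i<n. monom 1 i * pcompose (c i) (monom 1 n))"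
    and roots: "\<And>w. w ^ n = 1 \<Longrightarrow> poly (of_int_poly r) (l * w) = 0"
    and i: "i < n"
  shows "poly (of_int_poly (c i)) (l ^ n) = 0"
proof -
  define Q where "Q = (\<Sum>i<n. monom (poly (of_int_poly (c i)) (l ^ n) * l ^ i) i)"
  have "poly Q w = poly 0 w" if w: "w \<in> {w. w ^ n = 1}" for w
  proof -
    have "poly Q w = (\<Sum>i<n. (l * w) ^ i * poly (of_int_poly (c i)) ((l * w) ^ n))"
      using w by (simp add: Q_def poly_sum poly_monom power_mult_distrib mult_ac)
    also have "\<dots> = 0"
      using roots w by (simp add: poly_of_int_poly_decomposition[OF r])
    finally show ?thesis by simp
  qed
  moreover have "degree Q < card {w :: complex. w ^ n = 1}"
  proof -
    have "degree Q \<le> n - 1" unfolding Q_def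
      by (rule degree_sum_le) (auto intro: order.trans[OF degree_monom_le])
    then show ?thesis using n by (simp add: card_roots_unity_eq)
  qed
  ultimately have "Q = 0" by (intro poly_eqI_degree) auto
  then have "coeff Q i = 0" by simp
  then show ?thesis using i l by (simp add: Q_def coeff_sum coeff_monom)
qed

lemma geometric_progression_periodic:
  fixes l m :: "'a::idom"
  assumes "finite X" "l \<noteq> 0" "m \<noteq> 0" "\<forall>k\<le>card X. l * m ^ k \<in> X"
  obtains d where "d > 0" "m ^ d = 1" "\<And>k. l * m ^ k \<in> X"
proof -
  have "\<not> inj_on (\<lambda>k. l * m ^ k) {..card X}"
  proof
    assume "inj_on (\<lambda>k. l * m ^ k) {..card X}"
    then have "card {..card X} \<le> card X"
      using assms(1,4) by (intro card_inj_on_le) auto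
    then show False by simp
  qed
  then obtain a b where ab: "a < b" "b \<le> card X" "m ^ a = m ^ b"
    using assms(2) unfolding inj_on_def by (metis atMost_iff linorder_neqE_nat mult_left_cancel)
  define d where "d = b - a"
  have "m ^ a * m ^ d = m ^ b" using ab(1) by (simp add: d_def flip: power_add)
  then have "m ^ a * m ^ d = m ^ a * 1" using ab(3) by simp
  then have md: "m ^ d = 1" using assms(3) by simp
  have "l * m ^ k \<in> X" for k
  proof -
    have "k mod d < d" "d \<le> card X" using ab by (simp_all add: d_def)
    then have "l * m ^ (k mod d) \<in> X" using assms(4) by simp
    then show ?thesis by (simp only: power_mod_if_power_eq_1[OF md])
  qed
  then show ?thesis using that[of d] md ab by (simp add: d_def)
qed

lemma pcompose_monom_dvd_if_roots_rotation_invariant: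
  fixes l :: complex and r :: "int poly"
  assumes n: "n > 0" and l: "l \<noteq> 0" and r: "r \<noteq> 0"
    and roots: "\<And>w. w ^ n = 1 \<Longrightarrow> poly (of_int_poly r) (l * w) = 0"
  obtains s where "degree s > 0" "pcompose s (monom 1 n) dvd r"
proof -
  obtain c where decomp: "r = (\<Sum>i<n. monom 1 i * pcompose (c i) (monom 1 n))"
    using ex_decomposition_pcompose_monom[OF n] by blast
  have vanish: "poly (of_int_poly (c i)) (l ^ n) = 0" if "i < n" for i
    using decomposition_components_vanish[OF n l decomp roots that] .
  have "\<exists>i<n. c i \<noteq> 0"
  proof (rule ccontr)
    assume "\<not> (\<exists>i<n. c i \<noteq> 0)"
    then have "r = 0" unfolding decomp by simp
    then show False using r by contradiction
  qed
  then obtain i where "i < n" "c i \<noteq> 0" by blast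
  then obtain s where s: "int_minpoly (l ^ n) s" using int_minpoly_exists vanish by blast
  have "pcompose s (monom 1 n) dvd monom 1 i * pcompose (c i) (monom 1 n)" if i: "i < n" for i
  proof -
    obtain q where "c i = s * q" using vanish[OF i] int_minpoly_dvd_iff[OF s] by blast
    then show ?thesis by (simp add: pcompose_mult)
  qed
  then have "pcompose s (monom 1 n) dvd r" unfolding decomp by (intro dvd_sum) simp
  then show ?thesis using that degree_int_minpoly_pos[OF s] by blast
qed

lemma cyclotomic_dvd_and_pcompose_dvd_if_not_arith_free:
  fixes r :: "int poly"
  assumes r: "r \<noteq> 0"
    and not_free: "\<not> arith_free {z::complex. z \<noteq> 0 \<and> poly (of_int_poly r) z = 0}"
  obtains n s where "n > 0" "degree s > 0" "cyclotomic n dvd r" "pcompose s (monom 1 n) dvd r"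
proof -
  define X where "X = {z::complex. z \<noteq> 0 \<and> poly (of_int_poly r) z = 0}"
  have "of_int_poly r \<noteq> (0 :: complex poly)" using r of_int_poly_eq_iff[of r 0] by simp
  then have "finite X" unfolding X_def by (rule rev_finite_subset[OF poly_roots_finite]) auto
  then obtain l m where "l \<in> X" "m \<in> X" and progression: "\<forall>k\<le>card X. l * m ^ k \<in> X"
    using not_free unfolding arith_free_def X_def by blast
  then have l: "l \<noteq> 0" and m: "m \<noteq> 0" "poly (of_int_poly r) m = 0" by (auto simp: X_def)
  obtain d where d: "d > 0" "m ^ d = 1" and in_X: "\<And>k. l * m ^ k \<in> X"
    using geometric_progression_periodic[OF \<open>finite X\<close> l m(1) progression] by blast
  obtain n k where n: "n > 0" and k: "coprime k n" and m_eq: "m = zeta n ^ k"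
    using d by (rule root_unity_eq_primitive_zeta_power)
  have "poly (of_int_poly (cyclotomic n)) m = 0"
    unfolding m_eq using int_minpoly_root_power_coprime[OF int_minpoly_cyclotomic[OF n]
      zeta_power_self[OF n] k] .
  then have "int_minpoly m (cyclotomic n)"
    by (rule int_minpoly_conjugate[OF int_minpoly_cyclotomic[OF n]])
  then have "cyclotomic n dvd r" using m(2) by (simp add: int_minpoly_dvd_iff)
  moreover have "poly (of_int_poly r) (l * w) = 0" if w: "w ^ n = 1" for w
  proof -
    obtain j where "w = m ^ j"
      unfolding m_eq using root_unity_eq_power_zeta_power[OF n k w] by blast
    then show ?thesis using in_X[of j] by (simp add: X_def)
  qed
  then obtain s where "degree s > 0" "pcompose s (monom 1 n) dvd r"
    using pcompose_monom_dvd_if_roots_rotation_invariant[OF n l r] by blast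
  ultimately show ?thesis using that n by blast
qed

lemma not_arith_free_if_cyclotomic_dvd_and_pcompose_dvd:
  fixes r s :: "int poly"
  assumes r0: "poly r 0 \<noteq> 0" and n: "n > 0" and s: "degree s > 0"
    and cyclotomic: "cyclotomic n dvd r" and pcompose: "pcompose s (monom 1 n) dvd r"
  shows "\<not> arith_free {z::complex. z \<noteq> 0 \<and> poly (of_int_poly r) z = 0}"
proof -
  define X where "X = {z::complex. z \<noteq> 0 \<and> poly (of_int_poly r) z = 0}"
  have "poly (of_int_poly r) (zeta n) = 0"
    using cyclotomic int_minpoly_dvd_iff[OF int_minpoly_cyclotomic[OF n]] by blast
  then have zeta_X: "zeta n \<in> X" by (simp add: X_def zeta_def)
  obtain \<beta> :: complex where \<beta>: "poly (of_int_poly s) \<beta> = 0"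
    using alg_closed_imp_poly_has_root[of "of_int_poly s :: complex poly"] s
    by (auto simp: degree_map_poly)
  obtain l where l: "l ^ n = \<beta>" using nth_root_exists[OF n] by blast
  have roots: "poly (of_int_poly r) (l * w) = 0" if "w ^ n = 1" for w
  proof -
    have "poly (of_int_poly (pcompose s (monom 1 n))) (l * w) = 0"
      using that \<beta> l by (simp add: of_int_poly_hom poly_pcompose poly_monom power_mult_distrib)
    then show ?thesis using pcompose by (rule poly_of_int_poly_dvd[rotated])
  qed
  have "l \<noteq> 0"
  proof
    assume "l = 0"
    then have "poly (of_int_poly r) (0 :: complex) = 0" using roots[of 1] by simp
    then show False using r0 by (simp add: poly_0_coeff_0 coeff_map_poly)
  qed
  then have in_X: "l * zeta n ^ k \<in> X" for k
    using roots[OF root_unity_power[OF zeta_power_self[OF n]]] by (simp add: X_def zeta_def)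
  then have "l \<in> X" using in_X[of 0] by simp
  then show ?thesis using zeta_X in_X unfolding arith_free_def X_def by blast
qed

theorem proposition3p12:
  fixes r :: "int poly"
  assumes "poly r 0 \<noteq> 0"
  defines "X \<equiv> {z::complex. z \<noteq> 0 \<and> poly (map_poly of_int r) z = 0}"
  shows "(\<not> arith_free X) \<longleftrightarrow>
         (\<exists>u::nat. u \<ge> 1 \<and> (\<exists>s::int poly. degree s > 0 \<and>
            cyclotomic u dvd r \<and> pcompose s (monom 1 u) dvd r))"
proof
  assume "\<not> arith_free X"
  moreover have "r \<noteq> 0" using assms(1) by auto
  ultimately obtain u s where "u > 0" "degree s > 0" "cyclotomic u dvd r"
      "pcompose s (monom 1 u) dvd r"
    using cyclotomic_dvd_and_pcompose_dvd_if_not_arith_free unfolding X_def by blast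
  then show "\<exists>u::nat. u \<ge> 1 \<and> (\<exists>s::int poly. degree s > 0 \<and>
      cyclotomic u dvd r \<and> pcompose s (monom 1 u) dvd r)"
    by (intro exI[of _ u]) auto
next
  assume "\<exists>u::nat. u \<ge> 1 \<and> (\<exists>s::int poly. degree s > 0 \<and>
      cyclotomic u dvd r \<and> pcompose s (monom 1 u) dvd r)"
  then obtain u s where "u \<ge> 1" "degree s > 0" "cyclotomic u dvd r"
      "pcompose s (monom 1 u) dvd r"
    by blast
  then show "\<not> arith_free X"
    unfolding X_def by (intro not_arith_free_if_cyclotomic_dvd_and_pcompose_dvd[OF assms(1)]) auto
qed

end
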